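(* Let $k>0$ and $\mu\in\mathbb C$. The Riesz distribution $R_\mu$ has the following properties: (1) $R_\mu$ is $S_n$-invariant, i.e. $R_\mu^\sigma=R_\mu$ for all $\sigma\in S_n$; (2) $\mathrm{supp}\,R_\mu\subseteq\overline{\mathbb R_+^n}$; (3) $D(x)R_\mu=\prod_{j=1}^n(\mu-k(j-1))\cdot R_{\mu+1}$.
   Context: $S_n$ permutes coordinates; $\varphi^\sigma=\varphi\circ\sigma^{-1}$ and $\langle u^\sigma,\varphi\rangle=\langle u,\varphi^{\sigma^{-1}}\rangle$ for distributions $u$. $D(x)=\prod_ix_i$, $\mathbb R_+=]0,\infty[$, $\mu_0=k(n-1)$, $\omega_k(x)=\prod_{i<j}|x_i-x_j|^{2k}$, $d_n(k)=\prod_{j=1}^n\frac{\Gamma(1+jk)}{\Gamma(1+k)}$, $\Gamma_n(\mu;k)=\prod_{j=1}^n\Gamma(\mu-k(j-1))$. Dunkl operators $T_i(k)=\frac{\partial}{\partial x_i}+k\sum_{j\ne i}\frac{1}{x_i-x_j}(1-\sigma_{ij})$ ($\sigma_{ij}$ exchanging $x_i,x_j$), $D(T(k))=\prod_iT_i(k)$, acting on $\mathcal S'(\mathbb R^n)$ by $\langle T_i(k)u,\varphi\rangle=-\langle u,T_i(k)\varphi\rangle$. For $\mathrm{Re}\,\mu>\mu_0$, $\langle R_\mu,\varphi\rangle=\frac{1}{d_n(k)\Gamma_n(\mu;k)}\int_{\mathbb R_+^n}\varphi(x)D(x)^{\mu-\mu_0-1}\omega_k(x)dx$; for general $\mu$,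 $R_\mu$ is the unique holomorphic $\mathcal S'(\mathbb R^n)$-valued extension of $\mu\mapsto R_\mu$ to $\mathbb C$ (it satisfies $D(T(k))R_\mu=R_{\mu-1}$). *)

theory Defs
  imports "HOL-Analysis.Analysis"
begin

text \<open>Points of R^n are vectors real^'n, with n = CARD('n).
  Test functions and distributions are complex valued.\<close>

definition partial_deriv :: "'n::finite \<Rightarrow> (real^'n \<Rightarrow> complex) \<Rightarrow> real^'n \<Rightarrow> complex" where
  "partial_deriv i f x = vector_derivative (\<lambda>t. f (x + t *\<^sub>R axis i 1)) (at 0)"

fun iter_partial :: "'n::finite list \<Rightarrow> (real^'n \<Rightarrow> complex) \<Rightarrow> real^'n \<Rightarrow> complex" where
  "iter_partial [] f = f"
| "iter_partial (i # is) f = partial_deriv i (iter_partial is f)"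

definition smooth_fun :: "(real^'n::finite \<Rightarrow> complex) \<Rightarrow> bool" where
  "smooth_fun f \<longleftrightarrow> (\<forall>is x. iter_partial is f differentiable (at x))"

definition monomial :: "('n::finite \<Rightarrow> nat) \<Rightarrow> real^'n \<Rightarrow> real" where
  "monomial \<alpha> x = (\<Prod>i\<in>UNIV. (x $ i) ^ (\<alpha> i))"

definition schwartz :: "(real^'n::finite \<Rightarrow> complex) set" where
  "schwartz = {f. smooth_fun f \<and>
     (\<forall>is \<alpha>. bounded (range (\<lambda>x. monomial \<alpha> x *\<^sub>R iter_partial is f x)))}"

definition schwartz_seminorm :: "nat \<Rightarrow> (real^'n::finite \<Rightarrow> complex) \<Rightarrow> real" where
  "schwartz_seminorm N f =
     (\<Sum>is\<in>{is. length is \<le> N}. \<Sum>\<alpha>\<in>{\<alpha>. \<forall>i. \<alpha> i \<le> N}.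
        (SUP x. norm (monomial \<alpha> x *\<^sub>R iter_partial is f x)))"

text \<open>Tempered distributions: continuous linear functionals on S(R^n);
  only their values on Schwartz functions are relevant.\<close>
definition tempered_distribution :: "((real^'n::finite \<Rightarrow> complex) \<Rightarrow> complex) \<Rightarrow> bool" where
  "tempered_distribution u \<longleftrightarrow>
     (\<forall>f\<in>schwartz. \<forall>g\<in>schwartz. \<forall>a b. u (\<lambda>x. a * f x + b * g x) = a * u f + b * u g) \<and>
     (\<exists>C N. \<forall>f\<in>schwartz. norm (u f) \<le> C * schwartz_seminorm N f)"

text \<open>Coordinate permutation action: (perm_act s x)_i = x_(s^-1 i); phi^s = phi o s^-1;
  <u^s, phi> = <u, phi^(s^-1)> = <u, phi o s>.\<close>
definition perm_act :: "('n::finite \<Rightarrow> 'n) \<Rightarrow> real^'n \<Rightarrow> real^'n" where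
  "perm_act s x = (\<chi> i. x $ (inv s i))"

definition fun_perm :: "('n::finite \<Rightarrow> 'n) \<Rightarrow> (real^'n \<Rightarrow> complex) \<Rightarrow> real^'n \<Rightarrow> complex" where
  "fun_perm s f = f \<circ> perm_act (inv s)"

definition dist_perm :: "('n::finite \<Rightarrow> 'n) \<Rightarrow> ((real^'n \<Rightarrow> complex) \<Rightarrow> complex)
    \<Rightarrow> (real^'n \<Rightarrow> complex) \<Rightarrow> complex" where
  "dist_perm s u f = u (fun_perm (inv s) f)"

definition tsupport :: "(real^'n::finite \<Rightarrow> complex) \<Rightarrow> (real^'n) set" where
  "tsupport f = closure {x. f x \<noteq> 0}"

definition dist_supp_subset :: "((real^'n::finite \<Rightarrow> complex) \<Rightarrow> complex) \<Rightarrow> (real^'n) set \<Rightarrow> bool" where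
  "dist_supp_subset u K \<longleftrightarrow>
     (\<forall>f. smooth_fun f \<and> compact (tsupport f) \<and> tsupport f \<inter> K = {} \<longrightarrow> u f = 0)"

definition Dprod :: "real^'n::finite \<Rightarrow> real" where
  "Dprod x = (\<Prod>i\<in>UNIV. x $ i)"

definition dist_mult_D :: "((real^'n::finite \<Rightarrow> complex) \<Rightarrow> complex) \<Rightarrow> (real^'n \<Rightarrow> complex) \<Rightarrow> complex" where
  "dist_mult_D u f = u (\<lambda>x. complex_of_real (Dprod x) * f x)"

definition pos_orthant :: "(real^'n::finite) set" where
  "pos_orthant = {x. \<forall>i. 0 < x $ i}"

text \<open>omega_k(x) = prod_(i<j) |x_i - x_j|^(2k) = prod_(i \<noteq> j) |x_i - x_j|^k.\<close>
definition omega :: "real \<Rightarrow> real^'n::finite \<Rightarrow> real" where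
  "omega k x = (\<Prod>p\<in>{p::'n\<times>'n. fst p \<noteq> snd p}. \<bar>x $ fst p - x $ snd p\<bar> powr k)"

definition d_const :: "nat \<Rightarrow> real \<Rightarrow> real" where
  "d_const n k = (\<Prod>j=1..n. Gamma (1 + real j * k) / Gamma (1 + k))"

definition Gamma_n :: "nat \<Rightarrow> complex \<Rightarrow> real \<Rightarrow> complex" where
  "Gamma_n n \<mu> k = (\<Prod>j=1..n. Gamma (\<mu> - complex_of_real (k * (real j - 1))))"

definition mu0 :: "nat \<Rightarrow> real \<Rightarrow> real" where
  "mu0 n k = k * (real n - 1)"

text \<open>The defining integral of R_mu for Re mu > mu0.\<close>
definition riesz_integral :: "real \<Rightarrow> complex \<Rightarrow> (real^'n::finite \<Rightarrow> complex) \<Rightarrow> complex" where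
  "riesz_integral k \<mu> f =
     integral pos_orthant (\<lambda>x. f x * complex_of_real (Dprod x) powr (\<mu> - of_real (mu0 CARD('n) k) - 1)
                                 * complex_of_real (omega k x))
     / (complex_of_real (d_const CARD('n) k) * Gamma_n CARD('n) \<mu> k)"

text \<open>R is the Riesz family: an entire S'-valued (weakly holomorphic) function of mu
  which agrees with the integral for Re mu > mu0. It is unique by the identity theorem.\<close>
definition is_riesz_family :: "real \<Rightarrow> (complex \<Rightarrow> (real^'n::finite \<Rightarrow> complex) \<Rightarrow> complex) \<Rightarrow> bool" where
  "is_riesz_family k R \<longleftrightarrow>
     (\<forall>\<mu>. tempered_distribution (R \<mu>)) \<and>
     (\<forall>f\<in>schwartz. (\<lambda>\<mu>. R \<mu> f) holomorphic_on UNIV) \<and>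
     (\<forall>\<mu> f. Re \<mu> > mu0 CARD('n) k \<longrightarrow> f \<in> schwartz \<longrightarrow> R \<mu> f = riesz_integral k \<mu> f)"

end

theory Submission
  imports Defs "HOL-Complex_Analysis.Conformal_Mappings"
begin

text \<open>For \<open>Re \<mu> > \<mu>\<^sub>0\<close> all three statements are identities between the defining integrals:
  \<open>D\<close> and \<open>\<omega>\<^sub>k\<close> are symmetric and the orthant is permutation invariant, so the volume
  preserving substitution \<open>x \<mapsto> \<sigma> x\<close> does not change the integral; the integrand vanishes
  off the orthant; and \<open>D(x) D(x)\<^bsup>\<mu>-\<mu>\<^sub>0-1\<^esup> = D(x)\<^bsup>(\<mu>+1)-\<mu>\<^sub>0-1\<^esup>\<close> while
  \<open>\<Gamma>\<^sub>n(\<mu>+1) = \<Prod>\<^sub>j (\<mu> - k(j-1)) \<Gamma>\<^sub>n(\<mu>)\<close>. Schwartz space is stable under permutations of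
  the coordinates and under multiplication by \<open>D\<close>, so both sides of each identity are entire
  in \<open>\<mu>\<close>, and the identity theorem extends them from the half-plane to all of \<open>\<complex>\<close>.\<close>

section \<open>Permutations of coordinates\<close>

lemma perm_act_nth [simp]: "perm_act s x $ i = x $ inv s i"
  by (simp add: perm_act_def)

lemma perm_act_inv_cancel:
  assumes "s permutes (UNIV::'n::finite set)"
  shows "perm_act s (perm_act (inv s) x) = x" "perm_act (inv s) (perm_act s x) = x"
  using assms by (auto simp: vec_eq_iff permutes_inv_inv permutes_inverses)

lemma linear_perm_act: "linear (perm_act s)"
  by (intro linearI) (simp_all add: vec_eq_iff)

lemma perm_act_axis:
  assumes "s permutes (UNIV::'n::finite set)"
  shows "perm_act s (axis i 1) = axis (s i) 1"
  using assms by (auto simp: vec_eq_iff axis_def permutes_inverses)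

lemma all_permutes_iff:
  assumes "s permutes UNIV"
  shows "(\<forall>i. P (s i)) \<longleftrightarrow> (\<forall>i. P i)"
  using assms by (metis permutes_inverses(1))

lemma norm_perm_act:
  assumes "s permutes (UNIV::'n::finite set)"
  shows "norm (perm_act s x) = norm x"
proof -
  have "(\<Sum>i\<in>UNIV. (norm (x $ inv s i))\<^sup>2) = (\<Sum>i\<in>UNIV. (norm (x $ i))\<^sup>2)"
    using sum.permute[OF permutes_inv[OF assms], of "\<lambda>i. (norm (x $ i))\<^sup>2"] by (simp add: comp_def)
  then show ?thesis
    by (simp add: norm_vec_def L2_set_def)
qed

lemma perm_act_image_cbox:
  assumes s: "s permutes (UNIV::'n::finite set)"
  shows "perm_act s ` cbox u v = cbox (perm_act s u) (perm_act s v)"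
proof -
  have mem: "perm_act s x \<in> cbox (perm_act s u) (perm_act s v) \<longleftrightarrow> x \<in> cbox u v" for x
    using all_permutes_iff[OF permutes_inv[OF s], of "\<lambda>i. u $ i \<le> x $ i \<and> x $ i \<le> v $ i"]
    by (simp add: mem_box_cart)
  show ?thesis
    using mem[of "perm_act (inv s) _"] by (force simp: mem perm_act_inv_cancel[OF s])
qed

lemma measure_perm_act_image_cbox:
  assumes s: "s permutes (UNIV::'n::finite set)"
  shows "measure lborel (perm_act s ` cbox u v) = measure lborel (cbox u v)"
proof -
  have "(\<Prod>i\<in>UNIV. v $ inv s i - u $ inv s i) = (\<Prod>i\<in>UNIV. v $ i - u $ i)"
    using prod.permute[OF permutes_inv[OF s], of "\<lambda>i. v $ i - u $ i"] by (simp add: comp_def)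
  moreover have "cbox (perm_act s u) (perm_act s v) = {} \<longleftrightarrow> cbox u v = {}"
    using perm_act_image_cbox[OF s, of u v] by auto
  ultimately show ?thesis
    by (simp add: perm_act_image_cbox[OF s] content_cbox_if_cart)
qed

lemma has_integral_comp_perm_act_cbox:
  assumes s: "s permutes (UNIV::'n::finite set)"
    and f: "(f has_integral i) (cbox (perm_act s a) (perm_act s b))"
  shows "((\<lambda>x. f (perm_act s x)) has_integral i) (cbox a b)"
proof -
  have "((\<lambda>x. f (perm_act s x)) has_integral (1 / 1) *\<^sub>R i)
          (perm_act (inv s) ` cbox (perm_act s a) (perm_act s b))"
  proof (rule has_integral_twiddle[OF zero_less_one _ _ _ _ _ _ f])
    show "perm_act (inv s) (perm_act s x) = x" "perm_act s (perm_act (inv s) x) = x" for x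
      by (simp_all add: perm_act_inv_cancel[OF s])
    show "continuous (at x) (perm_act s)" for x
      by (rule linear_continuous_at) (metis linear_conv_bounded_linear linear_perm_act)
    show "\<exists>w z. perm_act s ` cbox u v = cbox w z" "\<exists>w z. perm_act (inv s) ` cbox u v = cbox w z"
      "measure lborel (perm_act s ` cbox u v) = 1 * measure lborel (cbox u v)" for u v
      using perm_act_image_cbox[OF s] perm_act_image_cbox[OF permutes_inv[OF s]]
        measure_perm_act_image_cbox[OF s] by auto
  qed
  then show ?thesis
    by (simp add: perm_act_image_cbox[OF permutes_inv[OF s]] perm_act_inv_cancel[OF s])
qed

lemma has_integral_comp_perm_act:
  assumes s: "s permutes (UNIV::'n::finite set)"
    and f: "(f has_integral i) (UNIV :: (real^'n) set)"
  shows "((\<lambda>x. f (perm_act s x)) has_integral i) UNIV"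
proof -
  have not_cbox: "\<nexists>a b. (UNIV :: (real^'n) set) = cbox a b"
    using not_bounded_UNIV bounded_cbox by metis
  have "\<exists>B>0. \<forall>a b. ball 0 B \<subseteq> cbox a b \<longrightarrow>
          (\<exists>z. ((\<lambda>x. f (perm_act s x)) has_integral z) (cbox a b) \<and> norm (z - i) < e)"
    if "e > 0" for e
  proof -
    obtain B where "B > 0" "\<And>a b. ball 0 B \<subseteq> cbox a b \<Longrightarrow>
        \<exists>z. (f has_integral z) (cbox a b) \<and> norm (z - i) < e"
      using has_integral_altD[OF f not_cbox \<open>e > 0\<close>] by auto
    moreover have "ball 0 B \<subseteq> cbox (perm_act s a) (perm_act s b)" if "ball 0 B \<subseteq> cbox a b" for a b
    proof
      fix y :: "real^'n"
      assume "y \<in> ball 0 B"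
      then have "perm_act (inv s) y \<in> cbox a b"
        using that norm_perm_act[OF permutes_inv[OF s]] by auto
      then show "y \<in> cbox (perm_act s a) (perm_act s b)"
        by (metis image_eqI perm_act_image_cbox[OF s] perm_act_inv_cancel(1)[OF s])
    qed
    ultimately show ?thesis
      by (metis has_integral_comp_perm_act_cbox[OF s])
  qed
  then show ?thesis
    by (subst has_integral_alt) (simp add: not_cbox)
qed

lemma integral_comp_perm_act:
  fixes f :: "real^'n::finite \<Rightarrow> 'a::banach"
  assumes s: "s permutes (UNIV::'n::finite set)"
    and S: "\<And>x. perm_act s x \<in> S \<longleftrightarrow> x \<in> S"
  shows "integral S (\<lambda>x. f (perm_act s x)) = integral S f"
proof -
  let ?g = "\<lambda>y. if y \<in> S then f y else 0"
  have "((\<lambda>x. ?g (perm_act s x)) has_integral j) UNIV \<longleftrightarrow> (?g has_integral j) UNIV" for j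
  proof
    assume "((\<lambda>x. ?g (perm_act s x)) has_integral j) UNIV"
    from has_integral_comp_perm_act[OF permutes_inv[OF s] this] show "(?g has_integral j) UNIV"
      by (simp add: perm_act_inv_cancel[OF s] cong: if_cong)
  qed (rule has_integral_comp_perm_act[OF s])
  then have "integral UNIV (\<lambda>x. ?g (perm_act s x)) = integral UNIV ?g"
    by (simp add: integral_def integrable_on_def)
  then show ?thesis
    by (simp add: S integral_restrict_UNIV)
qed

lemma Dprod_perm_act:
  assumes "s permutes (UNIV::'n::finite set)"
  shows "Dprod (perm_act s x) = Dprod x"
  using prod.permute[OF permutes_inv[OF assms], of "\<lambda>i. x $ i"] by (simp add: Dprod_def comp_def)

lemma omega_perm_act:
  assumes s: "s permutes (UNIV::'n::finite set)"
  shows "omega k (perm_act s x) = omega k x"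
proof -
  have "bij_betw (map_prod (inv s) (inv s)) {p::'n\<times>'n. fst p \<noteq> snd p} {p. fst p \<noteq> snd p}"
    by (rule bij_betwI[of _ _ _ "map_prod s s"])
      (use s in \<open>auto simp: permutes_inverses permutes_inv_eq inj_eq[OF permutes_inj[OF s]]\<close>)
  from prod.reindex_bij_betw[OF this, of "\<lambda>p. \<bar>x $ fst p - x $ snd p\<bar> powr k"]
  show ?thesis
    by (simp add: omega_def)
qed

lemma pos_orthant_perm_act:
  assumes "s permutes (UNIV::'n::finite set)"
  shows "perm_act s x \<in> pos_orthant \<longleftrightarrow> x \<in> pos_orthant"
  using all_permutes_iff[OF permutes_inv[OF assms], of "\<lambda>i. 0 < x $ i"] by (simp add: pos_orthant_def)

lemma partial_deriv_comp_perm_act: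
  assumes "s permutes (UNIV::'n::finite set)"
  shows "partial_deriv i (g \<circ> perm_act s) x = partial_deriv (s i) g (perm_act s x)"
  using linear_perm_act[of s]
  by (simp add: partial_deriv_def linear_add linear_scale perm_act_axis[OF assms])

lemma iter_partial_comp_perm_act:
  assumes "s permutes (UNIV::'n::finite set)"
  shows "iter_partial is (g \<circ> perm_act s) = iter_partial (map s is) g \<circ> perm_act s"
proof (induction "is")
  case (Cons i "is")
  show ?case
    using partial_deriv_comp_perm_act[OF assms, of i "iter_partial (map s is) g"]
    by (simp only: iter_partial.simps Cons.IH) (simp add: fun_eq_iff comp_def)
qed simp

lemma monomial_perm_act:
  assumes "s permutes (UNIV::'n::finite set)"
  shows "monomial \<alpha> x = monomial (\<alpha> \<circ> inv s) (perm_act s x)"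
  using prod.permute[OF permutes_inv[OF assms], of "\<lambda>i. (x $ i) ^ \<alpha> i"]
  by (simp add: monomial_def comp_def)

lemma schwartz_comp_perm_act:
  assumes s: "s permutes (UNIV::'n::finite set)" and f: "f \<in> schwartz"
  shows "f \<circ> perm_act s \<in> schwartz"
proof -
  have "iter_partial is (f \<circ> perm_act s) differentiable (at x)" for "is" x
    using f unfolding iter_partial_comp_perm_act[OF s]
    by (intro differentiable_chain_at[OF linear_imp_differentiable[OF linear_perm_act]])
      (auto simp: schwartz_def smooth_fun_def)
  moreover have "bounded (range (\<lambda>x. monomial \<alpha> x *\<^sub>R iter_partial is (f \<circ> perm_act s) x))"
    for "is" \<alpha>
  proof -
    let ?G = "\<lambda>y. monomial (\<alpha> \<circ> inv s) y *\<^sub>R iter_partial (map s is) f y"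
    have "monomial \<alpha> x *\<^sub>R iter_partial is (f \<circ> perm_act s) x = (?G \<circ> perm_act s) x" for x
      unfolding iter_partial_comp_perm_act[OF s] monomial_perm_act[OF s, of \<alpha> x] by simp
    moreover have "range (?G \<circ> perm_act s) \<subseteq> range ?G"
      by auto
    moreover have "bounded (range ?G)"
      using f by (simp add: schwartz_def)
    ultimately show ?thesis
      by (metis (no_types, lifting) bounded_subset image_cong)
  qed
  ultimately show ?thesis
    by (simp add: schwartz_def smooth_fun_def)
qed

section \<open>Smooth functions with compact support\<close>

lemma partial_deriv_zero_on_open:
  fixes g :: "real^'n::finite \<Rightarrow> complex"
  assumes "open U" "x \<in> U" and g: "\<And>y. y \<in> U \<Longrightarrow> g y = 0"
  shows "partial_deriv i g x = 0"
proof -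
  let ?V = "(\<lambda>t::real. x + t *\<^sub>R axis i 1) -` U"
  have "open ?V"
    by (rule continuous_open_vimage[OF \<open>open U\<close>]) (intro continuous_intros)
  moreover have "0 \<in> ?V"
    using \<open>x \<in> U\<close> by simp
  ultimately have "((\<lambda>t. g (x + t *\<^sub>R axis i 1)) has_vector_derivative 0) (at 0)"
    using has_vector_derivative_transform_within_open[of "\<lambda>t. 0" 0 0 ?V "\<lambda>t. g (x + t *\<^sub>R axis i 1)"]
      has_vector_derivative_const g by auto
  then show ?thesis
    unfolding partial_deriv_def by (rule vector_derivative_at)
qed

lemma iter_partial_zero_on_open:
  assumes "open U" "y \<in> U" and "\<And>y. y \<in> U \<Longrightarrow> g y = 0"
  shows "iter_partial is g y = 0"
  using assms(2)
proof (induction "is" arbitrary: y)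
  case (Cons i "is")
  then show ?case
    by (simp add: partial_deriv_zero_on_open[OF \<open>open U\<close>])
qed (simp add: assms(3))

lemma continuous_on_monomial: "continuous_on S (monomial \<alpha>)"
  unfolding monomial_def by (intro continuous_intros)

lemma smooth_compact_tsupport_imp_schwartz:
  assumes smooth: "smooth_fun f" and compact: "compact (tsupport f)"
  shows "f \<in> schwartz"
proof -
  have "open (- tsupport f)"
    by (auto simp: tsupport_def)
  moreover have "f y = 0" if "y \<in> - tsupport f" for y
    using that closure_subset[of "{x. f x \<noteq> 0}"] unfolding tsupport_def by blast
  ultimately have vanish: "iter_partial is f x = 0" if "x \<notin> tsupport f" for "is" x
    using that iter_partial_zero_on_open[of "- tsupport f"] by blast
  have "bounded (range (\<lambda>x. monomial \<alpha> x *\<^sub>R iter_partial is f x))" for \<alpha> "is"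
  proof -
    let ?F = "\<lambda>x. monomial \<alpha> x *\<^sub>R iter_partial is f x"
    have "iter_partial is f differentiable_on UNIV"
      using smooth unfolding smooth_fun_def differentiable_on_def
      by (auto intro: differentiable_at_withinI)
    then have "continuous_on UNIV ?F"
      by (intro continuous_on_scaleR continuous_on_monomial differentiable_imp_continuous_on)
    then have "bounded (?F ` tsupport f)"
      by (intro compact_imp_bounded compact_continuous_image compact)
        (auto intro: continuous_on_subset)
    moreover have "?F x \<in> insert 0 (?F ` tsupport f)" for x
      by (cases "x \<in> tsupport f") (simp_all add: vanish)
    then have "range ?F \<subseteq> insert 0 (?F ` tsupport f)"
      by blast
    ultimately show ?thesis
      using bounded_insert bounded_subset by blast
  qed
  then show ?thesis
    using smooth by (simp add: schwartz_def)
qed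

section \<open>Multiplication by coordinate functions\<close>

lemma has_vector_derivative_partial_deriv:
  fixes g :: "real^'n::finite \<Rightarrow> complex"
  assumes "g differentiable (at x)"
  shows "((\<lambda>t. g (x + t *\<^sub>R axis i 1)) has_vector_derivative partial_deriv i g x) (at 0)"
proof -
  have "(g \<circ> (\<lambda>t::real. x + t *\<^sub>R axis i 1)) differentiable (at 0)"
    using assms by (intro differentiable_chain_at derivative_intros) simp_all
  then show ?thesis
    unfolding partial_deriv_def by (simp add: comp_def vector_derivative_works)
qed

lemma partial_deriv_add:
  fixes g h :: "real^'n::finite \<Rightarrow> complex"
  assumes "g differentiable (at x)" "h differentiable (at x)"
  shows "partial_deriv i (\<lambda>y. g y + h y) x = partial_deriv i g x + partial_deriv i h x"
  unfolding partial_deriv_def[of i "\<lambda>y. g y + h y"]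
  by (intro vector_derivative_at has_vector_derivative_add has_vector_derivative_partial_deriv assms)

lemma partial_deriv_coord_scaleR:
  fixes g :: "real^'n::finite \<Rightarrow> complex"
  assumes "g differentiable (at x)"
  shows "partial_deriv i (\<lambda>y. (y $ j) *\<^sub>R g y) x
       = (x $ j) *\<^sub>R partial_deriv i g x + (if j = i then g x else 0)"
proof -
  have "((\<lambda>t. (x + t *\<^sub>R axis i 1) $ j) has_field_derivative (if j = i then 1 else 0)) (at 0)"
    by (auto simp: axis_def intro!: derivative_eq_intros)
  from has_vector_derivative_scaleR[OF this has_vector_derivative_partial_deriv[OF assms]]
  have "((\<lambda>t. (x + t *\<^sub>R axis i 1) $ j *\<^sub>R g (x + t *\<^sub>R axis i 1)) has_vector_derivative
      ((x + 0 *\<^sub>R axis i 1) $ j *\<^sub>R partial_deriv i g x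
        + (if j = i then 1 else 0) *\<^sub>R g (x + 0 *\<^sub>R axis i 1))) (at 0)" .
  from vector_derivative_at[OF this] show ?thesis
    unfolding partial_deriv_def[of i "\<lambda>y. (y $ j) *\<^sub>R g y"] by simp
qed

lemma differentiable_sum_list:
  fixes F :: "'c \<Rightarrow> 'a::real_normed_vector \<Rightarrow> 'b::real_normed_vector"
  assumes "\<And>l. l \<in> set L \<Longrightarrow> F l differentiable (at x)"
  shows "(\<lambda>y. \<Sum>l\<leftarrow>L. F l y) differentiable (at x)"
  using assms by (induction L) (auto intro!: differentiable_add)

lemma bounded_range_sum_list:
  fixes F :: "'c \<Rightarrow> 'a \<Rightarrow> 'b::real_normed_vector"
  assumes "\<And>l. l \<in> set L \<Longrightarrow> bounded (range (F l))"
  shows "bounded (range (\<lambda>x. \<Sum>l\<leftarrow>L. F l x))"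
  using assms by (induction L) (auto intro!: bounded_plus_comp)

lemma partial_deriv_sum_list:
  assumes "smooth_fun f"
  shows "partial_deriv i (\<lambda>y. \<Sum>l\<leftarrow>L. iter_partial l f y) x = (\<Sum>l\<leftarrow>L. iter_partial (i # l) f x)"
proof (induction L)
  case Nil
  show ?case
    by (simp add: partial_deriv_zero_on_open[of UNIV])
next
  case (Cons l L)
  then show ?case
    using assms by (simp add: partial_deriv_add differentiable_sum_list smooth_fun_def)
qed

text \<open>Without symmetry of second derivatives the terms produced by the product rule cannot be
  collected, so they are kept as an unspecified list of iterated partial derivatives of \<open>f\<close>.\<close>

lemma iter_partial_coord_scaleR:
  assumes smooth: "smooth_fun f"
  shows "\<exists>L. iter_partial is (\<lambda>y. (y $ j) *\<^sub>R f y)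
            = (\<lambda>x. (x $ j) *\<^sub>R iter_partial is f x + (\<Sum>l\<leftarrow>L. iter_partial l f x))"
proof (induction "is")
  case Nil
  show ?case
    by (intro exI[of _ "[]"]) simp
next
  case (Cons i "is")
  then obtain L where L: "iter_partial is (\<lambda>y. (y $ j) *\<^sub>R f y)
      = (\<lambda>x. (x $ j) *\<^sub>R iter_partial is f x + (\<Sum>l\<leftarrow>L. iter_partial l f x))"
    by blast
  have diff: "iter_partial l f differentiable (at x)" for l x
    using smooth by (simp add: smooth_fun_def)
  have "partial_deriv i (\<lambda>x. (x $ j) *\<^sub>R iter_partial is f x + (\<Sum>l\<leftarrow>L. iter_partial l f x)) x
      = (x $ j) *\<^sub>R iter_partial (i # is) f x
        + (\<Sum>l\<leftarrow>(if j = i then [is] else []) @ map (Cons i) L. iter_partial l f x)" for x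
    using diff
    by (simp add: partial_deriv_add differentiable_sum_list bounded_linear_vec_nth
        bounded_linear_imp_differentiable partial_deriv_coord_scaleR partial_deriv_sum_list[OF smooth]
        comp_def)
  then show ?case
    by (intro exI[of _ "(if j = i then [is] else []) @ map (Cons i) L"]) (simp add: L fun_eq_iff)
qed

lemma monomial_fun_upd_Suc:
  "monomial (\<alpha>(j := Suc (\<alpha> j))) x = x $ j * monomial \<alpha> (x :: real^'n::finite)"
proof -
  have "monomial \<beta> x = x $ j ^ \<beta> j * (\<Prod>i\<in>UNIV - {j}. x $ i ^ \<beta> i)" for \<beta>
    unfolding monomial_def by (subst prod.remove[of _ j]) auto
  then show ?thesis
    by (simp add: mult.assoc)
qed

lemma schwartz_coord_scaleR:
  assumes f: "f \<in> schwartz"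
  shows "(\<lambda>y. (y $ j) *\<^sub>R f y) \<in> schwartz"
proof -
  have smooth: "smooth_fun f"
    using f by (simp add: schwartz_def)
  have "iter_partial is (\<lambda>y. (y $ j) *\<^sub>R f y) differentiable (at x) \<and>
        bounded (range (\<lambda>x. monomial \<alpha> x *\<^sub>R iter_partial is (\<lambda>y. (y $ j) *\<^sub>R f y) x))" for "is" x \<alpha>
  proof -
    obtain L where L: "iter_partial is (\<lambda>y. (y $ j) *\<^sub>R f y)
        = (\<lambda>x. (x $ j) *\<^sub>R iter_partial is f x + (\<Sum>l\<leftarrow>L. iter_partial l f x))"
      using iter_partial_coord_scaleR[OF smooth] by blast
    have "(\<lambda>x. (x $ j) *\<^sub>R iter_partial is f x + (\<Sum>l\<leftarrow>L. iter_partial l f x)) differentiable (at x)"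
      using smooth
      by (intro differentiable_add differentiable_scaleR differentiable_sum_list)
        (simp_all add: bounded_linear_imp_differentiable bounded_linear_vec_nth smooth_fun_def)
    moreover have "monomial \<alpha> x *\<^sub>R ((x $ j) *\<^sub>R iter_partial is f x + (\<Sum>l\<leftarrow>L. iter_partial l f x))
        = monomial (\<alpha>(j := Suc (\<alpha> j))) x *\<^sub>R iter_partial is f x
            + (\<Sum>l\<leftarrow>L. monomial \<alpha> x *\<^sub>R iter_partial l f x)" for x
      by (simp add: monomial_fun_upd_Suc scaleR_conv_of_real algebra_simps
          sum_list_const_mult sum_list_mult_const comp_def)
    moreover have "bounded (range (\<lambda>x. monomial (\<alpha>(j := Suc (\<alpha> j))) x *\<^sub>R iter_partial is f x
        + (\<Sum>l\<leftarrow>L. monomial \<alpha> x *\<^sub>R iter_partial l f x)))"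
      using f by (intro bounded_plus_comp bounded_range_sum_list) (simp_all add: schwartz_def)
    ultimately show ?thesis
      unfolding L by simp
  qed
  then show ?thesis
    by (simp add: schwartz_def smooth_fun_def)
qed

lemma schwartz_Dprod_mult:
  assumes "f \<in> schwartz"
  shows "(\<lambda>x. complex_of_real (Dprod x) * f x) \<in> schwartz"
proof -
  have "(\<lambda>y. (\<Prod>i\<in>S. y $ i) *\<^sub>R f y) \<in> schwartz" if "finite S" for S
    using that
  proof (induction S rule: finite_induct)
    case (insert j S)
    then show ?case
      using schwartz_coord_scaleR[OF insert.IH, of j] by simp
  qed (use assms in \<open>simp add: eta_contract_eq\<close>)
  then show ?thesis
    by (simp add: Dprod_def scaleR_conv_of_real)
qed

section \<open>The Riesz distributions\<close>

lemma entire_eq_on_halfplane: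
  fixes F G :: "complex \<Rightarrow> complex"
  assumes "F holomorphic_on UNIV" "G holomorphic_on UNIV" "\<And>z. Re z > m \<Longrightarrow> F z = G z"
  shows "F w = G w"
proof (rule analytic_continuation_open[of "{z. Re z > m}" UNIV F G w])
  have "Re (complex_of_real (m + 1)) > m"
    by simp
  then show "{z. Re z > m} \<noteq> {}"
    by blast
qed (use assms in \<open>auto simp: open_halfspace_Re_gt\<close>)

lemma Re_Gamma_n_factor_pos:
  assumes "0 \<le> k" "Re \<mu> > mu0 n k" "j \<in> {1..n}"
  shows "Re (\<mu> - complex_of_real (k * (real j - 1))) > 0"
proof -
  have "k * (real j - 1) \<le> k * (real n - 1)"
    using assms by (intro mult_left_mono) auto
  then show ?thesis
    using assms(2) by (simp add: mu0_def)
qed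

lemma Gamma_n_add_one:
  assumes "0 \<le> k" "Re \<mu> > mu0 n k"
  shows "Gamma_n n (\<mu> + 1) k = (\<Prod>j=1..n. \<mu> - complex_of_real (k * (real j - 1))) * Gamma_n n \<mu> k"
proof -
  have "Gamma (\<mu> + 1 - c) = (\<mu> - c) * Gamma (\<mu> - c)" if "Re (\<mu> - c) > 0" for c
  proof -
    have "\<mu> - c \<notin> \<int>\<^sub>\<le>\<^sub>0"
      using that by (auto elim!: nonpos_Ints_cases simp: complex_eq_iff)
    from Gamma_plus1[OF this] show ?thesis
      by (simp add: diff_add_eq)
  qed
  then show ?thesis
    using Re_Gamma_n_factor_pos[OF assms] by (simp add: Gamma_n_def flip: prod.distrib)
qed

lemma riesz_integral_comp_perm_act:
  assumes s: "s permutes (UNIV::'n::finite set)"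
  shows "riesz_integral k \<mu> (f \<circ> perm_act s) = riesz_integral k \<mu> (f :: real^'n \<Rightarrow> complex)"
  using integral_comp_perm_act[OF s pos_orthant_perm_act[OF s],
      of "\<lambda>x. f x * complex_of_real (Dprod x) powr (\<mu> - of_real (mu0 CARD('n) k) - 1)
                * complex_of_real (omega k x)"]
  by (simp add: riesz_integral_def Dprod_perm_act[OF s] omega_perm_act[OF s])

lemma riesz_integral_vanishing_on_orthant:
  fixes f :: "real^'n::finite \<Rightarrow> complex"
  assumes "\<And>x. x \<in> pos_orthant \<Longrightarrow> f x = 0"
  shows "riesz_integral k \<mu> f = 0"
  unfolding riesz_integral_def
  by (subst Henstock_Kurzweil_Integration.integral_cong[where g = "\<lambda>x. 0"]) (simp_all add: assms)

lemma riesz_integral_Dprod_mult: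
  fixes f :: "real^'n::finite \<Rightarrow> complex"
  assumes "0 \<le> k" "Re \<mu> > mu0 CARD('n) k"
  shows "riesz_integral k \<mu> (\<lambda>x. complex_of_real (Dprod x) * f x)
       = (\<Prod>j=1..CARD('n). \<mu> - complex_of_real (k * (real j - 1))) * riesz_integral k (\<mu> + 1) f"
proof -
  let ?c = "complex_of_real (mu0 CARD('n) k)"
  have "w powr (\<mu> + 1 - ?c - 1) = w * w powr (\<mu> - ?c - 1)" for w
    \<comment> \<open>also at \<open>w = 0\<close>, where \<open>powr\<close> is \<open>0\<close>: no restriction to \<open>D(x) > 0\<close> is needed\<close>
    using powr_add[of w "\<mu> - ?c - 1" 1] by (simp add: add_diff_eq)
  then have integrand: "integral pos_orthant (\<lambda>x. complex_of_real (Dprod x) * f x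
        * complex_of_real (Dprod x) powr (\<mu> - ?c - 1) * complex_of_real (omega k x))
      = integral pos_orthant (\<lambda>x. f x * complex_of_real (Dprod x) powr (\<mu> + 1 - ?c - 1)
        * complex_of_real (omega k x))"
    by (simp only: mult_ac)
  have "\<mu> - complex_of_real (k * (real j - 1)) \<noteq> 0" if "j \<in> {1..CARD('n)}" for j
    using Re_Gamma_n_factor_pos[OF assms that] by auto
  then have "(\<Prod>j=1..CARD('n). \<mu> - complex_of_real (k * (real j - 1))) \<noteq> 0"
    by (subst prod_zero_iff) auto
  then show ?thesis
    unfolding riesz_integral_def Gamma_n_add_one[OF assms] integrand by (simp add: field_simps)
qed

lemma riesz_family_holomorphic:
  assumes "is_riesz_family k R" "f \<in> schwartz"
  shows "(\<lambda>\<mu>. R \<mu> f) holomorphic_on UNIV"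
  using assms by (simp add: is_riesz_family_def)

lemma riesz_family_eq_integral:
  assumes "is_riesz_family k R" "Re \<mu> > mu0 CARD('n) k" "f \<in> schwartz"
  shows "R \<mu> f = riesz_integral k \<mu> (f :: real^'n::finite \<Rightarrow> complex)"
  using assms unfolding is_riesz_family_def by blast

lemma riesz_family_eqI:
  fixes R :: "complex \<Rightarrow> (real^'n::finite \<Rightarrow> complex) \<Rightarrow> complex"
  assumes R: "is_riesz_family k R" and f: "f \<in> schwartz" and G: "G holomorphic_on UNIV"
    and eq: "\<And>z. Re z > mu0 CARD('n) k \<Longrightarrow> riesz_integral k z f = G z"
  shows "R \<mu> f = G \<mu>"
proof (rule entire_eq_on_halfplane[OF riesz_family_holomorphic[OF R f] G])
  fix z
  assume "Re z > mu0 CARD('n) k"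
  then show "R z f = G z"
    using riesz_family_eq_integral[OF R _ f] eq by simp
qed

lemma riesz_family_perm_invariant:
  fixes R :: "complex \<Rightarrow> (real^'n::finite \<Rightarrow> complex) \<Rightarrow> complex"
  assumes R: "is_riesz_family k R" and s: "s permutes (UNIV::'n set)" and f: "f \<in> schwartz"
  shows "dist_perm s (R \<mu>) f = R \<mu> f"
proof -
  have "R \<mu> (f \<circ> perm_act s) = R \<mu> f"
  proof (rule riesz_family_eqI[OF R schwartz_comp_perm_act[OF s f] riesz_family_holomorphic[OF R f]])
    fix z
    assume "Re z > mu0 CARD('n) k"
    then show "riesz_integral k z (f \<circ> perm_act s) = R z f"
      using riesz_family_eq_integral[OF R _ f] by (simp add: riesz_integral_comp_perm_act[OF s])
  qed
  then show ?thesis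
    by (simp add: dist_perm_def fun_perm_def permutes_inv_inv[OF s])
qed

lemma riesz_family_support:
  fixes R :: "complex \<Rightarrow> (real^'n::finite \<Rightarrow> complex) \<Rightarrow> complex"
  assumes R: "is_riesz_family k R"
  shows "dist_supp_subset (R \<mu>) (closure pos_orthant)"
  unfolding dist_supp_subset_def
proof (intro allI impI)
  fix f :: "real^'n \<Rightarrow> complex"
  assume f: "smooth_fun f \<and> compact (tsupport f) \<and> tsupport f \<inter> closure pos_orthant = {}"
  have "f x = 0" if "x \<in> pos_orthant" for x
  proof -
    have "x \<notin> tsupport f"
      using f that closure_subset[of pos_orthant] by blast
    then show ?thesis
      using closure_subset[of "{x. f x \<noteq> 0}"] unfolding tsupport_def by blast
  qed
  moreover have "f \<in> schwartz"
    using f smooth_compact_tsupport_imp_schwartz by blast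
  ultimately show "R \<mu> f = 0"
    by (intro riesz_family_eqI[OF R _ holomorphic_on_const] riesz_integral_vanishing_on_orthant)
qed

lemma riesz_family_Dprod_mult:
  fixes R :: "complex \<Rightarrow> (real^'n::finite \<Rightarrow> complex) \<Rightarrow> complex"
  assumes "0 \<le> k" and R: "is_riesz_family k R" and f: "f \<in> schwartz"
  shows "dist_mult_D (R \<mu>) f =
           (\<Prod>j=1..CARD('n). \<mu> - complex_of_real (k * (real j - 1))) * R (\<mu> + 1) f"
proof -
  have "(\<lambda>\<mu>::complex. \<mu> + 1) holomorphic_on UNIV"
    by (intro holomorphic_intros)
  then have "(\<lambda>\<mu>. R (\<mu> + 1) f) holomorphic_on UNIV"
    using holomorphic_on_compose[of "\<lambda>\<mu>. \<mu> + 1" UNIV "\<lambda>\<mu>. R \<mu> f"] riesz_family_holomorphic[OF R f]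
    by (simp add: comp_def)
  then have "(\<lambda>\<mu>. (\<Prod>j=1..CARD('n). \<mu> - complex_of_real (k * (real j - 1))) * R (\<mu> + 1) f)
      holomorphic_on UNIV"
    by (intro holomorphic_intros)
  then show ?thesis
    unfolding dist_mult_D_def
  proof (rule riesz_family_eqI[OF R schwartz_Dprod_mult[OF f]])
    fix z
    assume "Re z > mu0 CARD('n) k"
    then show "riesz_integral k z (\<lambda>x. complex_of_real (Dprod x) * f x)
        = (\<Prod>j=1..CARD('n). z - complex_of_real (k * (real j - 1))) * R (z + 1) f"
      using riesz_integral_Dprod_mult[OF \<open>0 \<le> k\<close>] riesz_family_eq_integral[OF R _ f] by simp
  qed
qed

theorem lemma5p8:
  fixes k :: real and \<mu> :: complex
    and R :: "complex \<Rightarrow> (real^'n::finite \<Rightarrow> complex) \<Rightarrow> complex"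
  assumes "k > 0"
    and "is_riesz_family k R"
  shows "(\<forall>s. s permutes (UNIV::'n set) \<longrightarrow> (\<forall>f\<in>schwartz. dist_perm s (R \<mu>) f = R \<mu> f)) \<and>
         dist_supp_subset (R \<mu>) (closure pos_orthant) \<and>
         (\<forall>f\<in>schwartz. dist_mult_D (R \<mu>) f =
           (\<Prod>j=1..CARD('n). \<mu> - complex_of_real (k * (real j - 1))) * R (\<mu> + 1) f)"
  using riesz_family_perm_invariant[OF assms(2)] riesz_family_support[OF assms(2)]
    riesz_family_Dprod_mult[OF less_imp_le[OF assms(1)] assms(2)]
  by blast

end
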